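(* Let $p$ be an odd prime and let $\alpha$ be a root of $H_p(X,1)$. For a positive integer $M$ let $\zeta_M$ denote a primitive $M$-th root of unity. Then $\mathbb{Q}(\alpha)=\mathbb{Q}(\zeta_{4p}+\zeta_{4p}^{-1})$ (inside $\mathbb{C}$, with $\zeta_{4p}=e^{2\pi i/(4p)}$); in particular $[\mathbb{Q}(\alpha):\mathbb{Q}]=p-1$, and $\mathbb{Q}(\zeta_p+\zeta_p^{-1})\subset\mathbb{Q}(\alpha)$ for $\zeta_p=\zeta_{4p}^4$.
   Context: For an odd prime $p$ put $\delta_4=1$ if $p\equiv 1\pmod 4$, $\delta_4=-1$ if $p\equiv 3\pmod 4$. Let $G_p(u,v)=\mathrm{Im}\big((1+i)(u+iv)^p\big)\in\mathbb{Z}[u,v]$ (for real $u,v$); $u+\delta_4 v$ divides $G_p$ in $\mathbb{Z}[u,v]$, and $H_p(u,v):=G_p(u,v)/(u+\delta_4 v)\in\mathbb{Z}[u,v]$. The roots of $H_p(X,1)$ are the $p-1$ real numbers $\tan\frac{(4j+3)\pi}{4p}$, $j\in\{0,\dots,p-1\}$, different from $-\delta_4$. *)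

theory Defs
  imports Complex_Main "HOL-Computational_Algebra.Polynomial"
begin

definition delta4 :: "nat \<Rightarrow> real" where
  "delta4 p = (if p mod 4 = 1 then 1 else -1)"

text \<open>G_p(X,1) = Im((1+i)(X+i)^p), as a real polynomial in X (for real X,
  Im is linear, so taking Im of the coefficients is the same).\<close>
definition Gp1 :: "nat \<Rightarrow> real poly" where
  "Gp1 p = map_poly Im (smult (1 + \<i>) ([:\<i>, 1:] ^ p))"

definition Hp1 :: "nat \<Rightarrow> real poly" where
  "Hp1 p = Gp1 p div [:delta4 p, 1:]"

definition subfield_C :: "complex set \<Rightarrow> bool" where
  "subfield_C K \<longleftrightarrow> 0 \<in> K \<and> 1 \<in> K \<and>
     (\<forall>x\<in>K. \<forall>y\<in>K. x + y \<in> K \<and> x - y \<in> K \<and> x * y \<in> K) \<and>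
     (\<forall>x\<in>K. x \<noteq> 0 \<longrightarrow> inverse x \<in> K)"

definition Qadj :: "complex set \<Rightarrow> complex set" where
  "Qadj S = \<Inter>{K. subfield_C K \<and> S \<subseteq> K}"

definition Q_basis :: "complex set \<Rightarrow> complex set \<Rightarrow> bool" where
  "Q_basis K B \<longleftrightarrow> finite B \<and> B \<subseteq> K \<and>
     (\<forall>c :: complex \<Rightarrow> rat. (\<Sum>b\<in>B. of_rat (c b) * b) = 0 \<longrightarrow> (\<forall>b\<in>B. c b = 0)) \<and>
     (\<forall>x\<in>K. \<exists>c :: complex \<Rightarrow> rat. x = (\<Sum>b\<in>B. of_rat (c b) * b))"

definition Q_degree_eq :: "complex set \<Rightarrow> nat \<Rightarrow> bool" where
  "Q_degree_eq K n \<longleftrightarrow> (\<exists>B. Q_basis K B \<and> card B = n)"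

end

(*
  H_p(X - delta_4) is an Eisenstein polynomial at p: G_p(X - delta_4) is congruent to X^p
  modulo p, and H_p(-delta_4) = G_p'(-delta_4) is p times a power of 2 up to sign. So H_p is
  irreducible over Q, and a root alpha generates a field of degree p - 1; in particular alpha
  is irrational. The Cayley transform w = (alpha + i) / (alpha - i) turns G_p(alpha) = 0 into
  w^p = -i, hence w = zeta^m with m odd; p does not divide m, since otherwise w^4 = 1 and
  alpha would be one of 0, 1, -1. Thus w and zeta are powers of each other. Now w + 1/w is a
  rational function of alpha, and zeta + 1/zeta is a Chebyshev polynomial in it; conversely
  alpha = i (w + 1) / (w - 1) is a quotient of two numbers of the form zeta^k + zeta^-k,
  which are Chebyshev polynomials in zeta + 1/zeta.
*)
theory Submission
  imports Defs "Berlekamp_Zassenhaus.Factor_Bound"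
begin

(* HOL-Algebra, loaded along with the Gauss lemma, has its own coeff, monom and smult. *)
hide_const (open) up_ring.coeff up_ring.monom module.smult

section \<open>Subfields of the complex numbers\<close>

lemma subfield_C_Qadj: "subfield_C (Qadj S)"
  unfolding subfield_C_def Qadj_def by auto

lemma subset_Qadj: "S \<subseteq> Qadj S"
  unfolding Qadj_def by auto

lemma Qadj_least: "subfield_C K \<Longrightarrow> S \<subseteq> K \<Longrightarrow> Qadj S \<subseteq> K"
  unfolding Qadj_def by auto

lemma Qadj_singleton_subset: "x \<in> Qadj S \<Longrightarrow> Qadj {x} \<subseteq> Qadj S"
  using Qadj_least subfield_C_Qadj by blast

context
  fixes K :: "complex set"
  assumes K: "subfield_C K"
begin

lemma subfield_C_0: "0 \<in> K"
  and subfield_C_1: "1 \<in> K"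
  and subfield_C_add: "x \<in> K \<Longrightarrow> y \<in> K \<Longrightarrow> x + y \<in> K"
  and subfield_C_diff: "x \<in> K \<Longrightarrow> y \<in> K \<Longrightarrow> x - y \<in> K"
  and subfield_C_mult: "x \<in> K \<Longrightarrow> y \<in> K \<Longrightarrow> x * y \<in> K"
  using K unfolding subfield_C_def by auto

lemma subfield_C_inverse: "x \<in> K \<Longrightarrow> inverse x \<in> K"
  using K unfolding subfield_C_def by (cases "x = 0") auto

lemma subfield_C_divide: "x \<in> K \<Longrightarrow> y \<in> K \<Longrightarrow> x / y \<in> K"
  by (simp add: divide_inverse subfield_C_mult subfield_C_inverse)

lemma subfield_C_uminus: "x \<in> K \<Longrightarrow> - x \<in> K"
  using subfield_C_diff[OF subfield_C_0] by simp

lemma subfield_C_power: "x \<in> K \<Longrightarrow> x ^ n \<in> K"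
  by (induction n) (auto intro: subfield_C_mult subfield_C_1)

lemma subfield_C_of_nat: "of_nat n \<in> K"
  by (induction n) (auto intro: subfield_C_add subfield_C_1 subfield_C_0)

lemma subfield_C_of_int: "of_int n \<in> K"
  by (cases n rule: int_cases) (simp_all add: subfield_C_of_nat subfield_C_uminus del: of_nat_Suc)

lemma subfield_C_Rats: "x \<in> \<rat> \<Longrightarrow> x \<in> K"
proof (induction rule: Rats_induct)
  case (of_rat r)
  obtain a b where "r = Rat.Fract a b" "b > 0" by (cases r) auto
  then have "(of_rat r :: complex) = of_int a / of_int b" by (simp add: of_rat_rat)
  then show ?case by (simp add: subfield_C_divide subfield_C_of_int)
qed

lemma subfield_C_poly_of_rat: "z \<in> K \<Longrightarrow> poly (map_poly of_rat q) z \<in> K"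
proof (induction q)
  case (pCons a q)
  then show ?case
    by (simp add: map_poly_pCons subfield_C_add subfield_C_mult subfield_C_Rats)
qed (simp add: subfield_C_0)

lemma subfield_C_power_add_inverse_power:
  assumes u0: "u \<noteq> 0" and u: "u + inverse u \<in> K"
  shows "u ^ k + inverse u ^ k \<in> K"
proof -
  have "u ^ k + inverse u ^ k \<in> K \<and> u ^ Suc k + inverse u ^ Suc k \<in> K" for k
  proof (induction k)
    case 0
    then show ?case using u subfield_C_add[OF subfield_C_1 subfield_C_1] by simp
  next
    case (Suc k)
    have "(u + inverse u) * (u ^ Suc k + inverse u ^ Suc k) =
          u ^ Suc (Suc k) + inverse u ^ Suc (Suc k) + (u * inverse u) * (u ^ k + inverse u ^ k)"
      by (simp add: algebra_simps)
    then have "u ^ Suc (Suc k) + inverse u ^ Suc (Suc k) =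
          (u + inverse u) * (u ^ Suc k + inverse u ^ Suc k) - (u ^ k + inverse u ^ k)"
      using u0 by simp
    then show ?case using Suc u by (simp add: subfield_C_mult subfield_C_diff)
  qed
  then show ?thesis by blast
qed

end

section \<open>Simple extensions by a root of an irreducible polynomial\<close>

interpretation of_rat_poly_hom: map_poly_idom_hom "of_rat :: rat \<Rightarrow> 'a :: field_char_0" ..

lemma field_poly_irreducible_dvd_or_bezout:
  fixes M q :: "'a :: field_gcd poly"
  assumes "irreducible M"
  shows "M dvd q \<or> (\<exists>a b. a * M + b * q = 1)"
proof (cases "M dvd q")
  case False
  have "gcd M q = 1"
    using prime_elem_imp_coprime[OF irreducible_imp_prime_elem[OF assms] False]
    by (simp add: coprime_iff_gcd_eq_1)
  then show ?thesis using bezout_coefficients_fst_snd[of M q] by auto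
qed simp

context
  fixes M :: "rat poly" and \<gamma> :: complex
  assumes irr: "irreducible M" and root: "poly (map_poly of_rat M) \<gamma> = 0"
begin

lemma irreducible_root_dvd:
  assumes "poly (map_poly of_rat q) \<gamma> = 0"
  shows "M dvd q"
proof -
  have "\<not> (\<exists>a b. a * M + b * q = 1)"
  proof
    assume "\<exists>a b. a * M + b * q = 1"
    then obtain a b where "a * M + b * q = 1" by blast
    then have "poly (map_poly (of_rat :: rat \<Rightarrow> complex) (a * M + b * q)) \<gamma> = 1" by simp
    then show False using root assms by (simp add: hom_distribs)
  qed
  then show ?thesis using field_poly_irreducible_dvd_or_bezout[OF irr] by blast
qed

lemma irreducible_root_degree_le:
  assumes "q \<noteq> 0" "poly (map_poly of_rat q) \<gamma> = 0"
  shows "degree M \<le> degree q"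
  using dvd_imp_degree_le[OF irreducible_root_dvd[OF assms(2)] assms(1)] .

lemma irreducible_root_inverse:
  assumes "poly (map_poly of_rat q) \<gamma> \<noteq> 0"
  obtains b where "poly (map_poly of_rat b) \<gamma> * poly (map_poly of_rat q) \<gamma> = 1"
proof -
  have "\<not> M dvd q" using assms root by (auto elim!: dvdE simp: hom_distribs)
  then obtain a b where "a * M + b * q = 1" using field_poly_irreducible_dvd_or_bezout[OF irr] by blast
  then have "poly (map_poly (of_rat :: rat \<Rightarrow> complex) (a * M + b * q)) \<gamma> = 1" by simp
  then show ?thesis using that root by (simp add: hom_distribs)
qed

lemma irreducible_root_not_Rats:
  assumes "degree M \<ge> 2"
  shows "\<gamma> \<notin> \<rat>"
proof
  assume "\<gamma> \<in> \<rat>"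
  then obtain r where r: "\<gamma> = of_rat r" by (auto elim: Rats_cases)
  have "degree M \<le> degree [:- r, 1:]"
    by (rule irreducible_root_degree_le) (simp_all add: r hom_distribs of_rat_minus)
  then show False using assms by simp
qed

lemma Qadj_irreducible_root: "Qadj {\<gamma>} = range (\<lambda>q. poly (map_poly of_rat q) \<gamma>)"
proof
  let ?F = "range (\<lambda>q. poly (map_poly (of_rat :: rat \<Rightarrow> complex) q) \<gamma>)"
  have "subfield_C ?F"
    unfolding subfield_C_def
  proof (intro conjI ballI impI)
    show "0 \<in> ?F" by (rule range_eqI[of _ _ 0]) simp
    show "1 \<in> ?F" by (rule range_eqI[of _ _ 1]) simp
    fix x y assume "x \<in> ?F" "y \<in> ?F"
    then obtain a b where x: "x = poly (map_poly of_rat a) \<gamma>" and y: "y = poly (map_poly of_rat b) \<gamma>"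
      by auto
    show "x + y \<in> ?F" by (rule range_eqI[of _ _ "a + b"]) (simp add: x y hom_distribs)
    show "x - y \<in> ?F" by (rule range_eqI[of _ _ "a - b"]) (simp add: x y hom_distribs)
    show "x * y \<in> ?F" by (rule range_eqI[of _ _ "a * b"]) (simp add: x y hom_distribs)
  next
    fix x assume "x \<in> ?F" "x \<noteq> 0"
    then obtain q where x: "x = poly (map_poly of_rat q) \<gamma>" by auto
    then obtain b where "poly (map_poly of_rat b) \<gamma> * x = 1"
      using irreducible_root_inverse \<open>x \<noteq> 0\<close> by blast
    then have "inverse x = poly (map_poly of_rat b) \<gamma>" by (simp add: inverse_unique mult.commute)
    then show "inverse x \<in> ?F" by simp
  qed
  moreover have "\<gamma> \<in> ?F" by (rule range_eqI[of _ _ "[:0, 1:]"]) simp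
  ultimately show "Qadj {\<gamma>} \<subseteq> ?F" by (simp add: Qadj_least)
  show "?F \<subseteq> Qadj {\<gamma>}"
    using subfield_C_poly_of_rat[OF subfield_C_Qadj] subset_Qadj[of "{\<gamma>}"] by auto
qed

lemma Q_degree_eq_Qadj_irreducible_root: "Q_degree_eq (Qadj {\<gamma>}) (degree M)"
proof -
  define n where "n = degree M"
  have "n \<noteq> 0"
    using irr by (auto simp: n_def is_unit_iff_degree irreducible_def)
  have eval_sum: "poly (map_poly of_rat (\<Sum>i<n. monom (c i) i)) \<gamma> = (\<Sum>i<n. of_rat (c i) * \<gamma> ^ i)"
    for c :: "nat \<Rightarrow> rat"
    by (simp add: hom_distribs poly_sum poly_monom)
  have indep: "c i = 0" if "(\<Sum>i<n. of_rat (c i) * \<gamma> ^ i) = 0" "i < n" for c i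
  proof -
    let ?q = "\<Sum>i<n. monom (c i) i"
    have "degree ?q < n"
      using \<open>n \<noteq> 0\<close> by (intro le_less_trans[OF degree_le[of "n - 1"]]) (auto simp: coeff_sum)
    then have "?q = 0"
      using irreducible_root_degree_le[of ?q] that(1) eval_sum n_def by fastforce
    moreover have "coeff ?q i = c i" using that(2) by (simp add: coeff_sum coeff_monom)
    ultimately show ?thesis by simp
  qed
  have inj: "inj_on (\<lambda>i. \<gamma> ^ i) {..<n}"
  proof (rule inj_onI, rule ccontr)
    fix i j assume ij: "i \<in> {..<n}" "j \<in> {..<n}" "\<gamma> ^ i = \<gamma> ^ j" "i \<noteq> j"
    let ?c = "\<lambda>k. of_bool (k = i) - of_bool (k = j) :: rat"
    have "(\<Sum>k<n. of_rat (?c k) * \<gamma> ^ k) =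
        (\<Sum>k<n. if k = i then \<gamma> ^ k else 0) - (\<Sum>k<n. if k = j then \<gamma> ^ k else 0)"
      unfolding sum_subtractf[symmetric] by (intro sum.cong) auto
    also have "\<dots> = 0" using ij by simp
    finally have "?c i = 0" by (rule indep) (use ij in simp)
    then show False using ij by simp
  qed
  define B where "B = (\<lambda>i. \<gamma> ^ i) ` {..<n}"
  have sum_B: "(\<Sum>b\<in>B. f b) = (\<Sum>i<n. f (\<gamma> ^ i))" for f :: "complex \<Rightarrow> complex"
    unfolding B_def by (simp add: sum.reindex[OF inj])
  have "Q_basis (Qadj {\<gamma>}) B"
    unfolding Q_basis_def
  proof (intro conjI allI impI ballI)
    show "finite B" "B \<subseteq> Qadj {\<gamma>}"
      unfolding B_def using subfield_C_power[OF subfield_C_Qadj] subset_Qadj[of "{\<gamma>}"] by auto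
  next
    fix c :: "complex \<Rightarrow> rat" and b
    assume sum0: "(\<Sum>b\<in>B. of_rat (c b) * b) = 0" and "b \<in> B"
    then obtain i where "i < n" "b = \<gamma> ^ i" by (auto simp: B_def)
    moreover have "(\<Sum>i<n. of_rat (c (\<gamma> ^ i)) * \<gamma> ^ i) = 0" using sum0 by (simp add: sum_B)
    ultimately show "c b = 0" using indep[of "\<lambda>i. c (\<gamma> ^ i)"] by blast
  next
    fix x assume "x \<in> Qadj {\<gamma>}"
    then obtain q where x: "x = poly (map_poly of_rat q) \<gamma>" by (auto simp: Qadj_irreducible_root)
    define r where "r = q mod M"
    have "x = poly (map_poly of_rat r) \<gamma>"
      using x root div_mult_mod_eq[of q M] unfolding r_def
      by (metis add_0 mult_zero_right poly_add poly_mult of_rat_poly_hom.hom_add of_rat_poly_hom.hom_mult)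
    also have "r = (\<Sum>i<n. monom (coeff r i) i)"
    proof (rule poly_eqI)
      have "degree r < n \<or> r = 0"
        using degree_mod_less[of M q] irr unfolding r_def n_def by (auto simp: irreducible_def)
      then show "coeff r k = coeff (\<Sum>i<n. monom (coeff r i) i) k" for k
        by (auto simp: coeff_sum coeff_eq_0)
    qed
    also have "poly (map_poly of_rat \<dots>) \<gamma> = (\<Sum>i<n. of_rat (coeff r i) * \<gamma> ^ i)"
      by (rule eval_sum)
    also have "\<dots> = (\<Sum>b\<in>B. of_rat (coeff r (the_inv_into {..<n} (\<lambda>i. \<gamma> ^ i) b)) * b)"
      using the_inv_into_f_f[OF inj] by (simp add: sum_B)
    finally show "\<exists>c :: complex \<Rightarrow> rat. x = (\<Sum>b\<in>B. of_rat (c b) * b)"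
      by (rule exI[of _ "\<lambda>b. coeff r (the_inv_into {..<n} (\<lambda>i. \<gamma> ^ i) b)"])
  qed
  moreover have "card B = n" unfolding B_def using card_image[OF inj] by simp
  ultimately show ?thesis unfolding Q_degree_eq_def n_def by blast
qed

end

section \<open>Eisenstein's criterion\<close>

lemma prime_not_dvd_coeff_mult:
  fixes g h :: "int poly" and q :: int
  assumes q: "prime q" and "q dvd coeff g 0" and h0: "\<not> q dvd coeff h 0"
    and lead: "\<not> q dvd lead_coeff g"
  obtains k where "k \<le> degree g" "\<not> q dvd coeff (g * h) k"
proof -
  define k where "k = (LEAST k. \<not> q dvd coeff g k)"
  have gk: "\<not> q dvd coeff g k" unfolding k_def by (rule LeastI[of _ "degree g"]) (rule lead)
  have "k \<le> degree g" unfolding k_def by (rule Least_le) (rule lead)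
  have "q dvd coeff g i" if "i < k" for i
    using not_less_Least[of i "\<lambda>k. \<not> q dvd coeff g k"] that unfolding k_def by blast
  then have "q dvd (\<Sum>i<k. coeff g i * coeff h (k - i))" by (intro dvd_sum) simp
  moreover have "coeff (g * h) k = (\<Sum>i<k. coeff g i * coeff h (k - i)) + coeff g k * coeff h 0"
    by (simp add: coeff_mult lessThan_Suc_atMost[symmetric])
  moreover have "\<not> q dvd coeff g k * coeff h 0" using q gk h0 by (simp add: prime_dvd_mult_iff)
  ultimately have "\<not> q dvd coeff (g * h) k" by (metis dvd_add_right_iff)
  with \<open>k \<le> degree g\<close> show ?thesis using that by blast
qed

theorem eisenstein_irreducible_d:
  fixes f :: "int poly" and q :: int
  assumes q: "prime q" and deg: "degree f > 0" and lead: "\<not> q dvd lead_coeff f"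
    and low: "\<And>j. j < degree f \<Longrightarrow> q dvd coeff f j"
    and const: "\<not> q\<^sup>2 dvd coeff f 0"
  shows "irreducible\<^sub>d f"
proof (rule irreducible\<^sub>dI[OF deg])
  fix g h assume "degree g > 0" "degree g < degree f" "degree h > 0" "degree h < degree f"
    and f: "f = g * h"
  have lead_gh: "\<not> q dvd lead_coeff g" "\<not> q dvd lead_coeff h"
    using lead unfolding f lead_coeff_mult by (auto intro: dvd_mult2 dvd_mult)
  have f0: "coeff f 0 = coeff g 0 * coeff h 0" unfolding f by (simp add: coeff_mult)
  have "q dvd coeff g 0 \<or> q dvd coeff h 0"
    using low[OF deg] q unfolding f0 by (simp add: prime_dvd_mult_iff)
  moreover have "\<not> (q dvd coeff g 0 \<and> q dvd coeff h 0)"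
    using const unfolding f0 power2_eq_square by (auto intro: mult_dvd_mono)
  ultimately consider "q dvd coeff g 0" "\<not> q dvd coeff h 0" | "q dvd coeff h 0" "\<not> q dvd coeff g 0"
    by blast
  then show False
  proof cases
    case 1
    then obtain k where "k \<le> degree g" "\<not> q dvd coeff (g * h) k"
      using prime_not_dvd_coeff_mult[OF q _ _ lead_gh(1)] by blast
    then show False using low \<open>degree g < degree f\<close> unfolding f by simp
  next
    case 2
    then obtain k where "k \<le> degree h" "\<not> q dvd coeff (h * g) k"
      using prime_not_dvd_coeff_mult[OF q _ _ lead_gh(2)] by blast
    then show False using low \<open>degree h < degree f\<close> unfolding f by (simp add: mult.commute)
  qed
qed

lemma irreducible_d_pcompose_linear:
  fixes f l :: "'a :: idom poly"
  assumes irr: "irreducible\<^sub>d (f \<circ>\<^sub>p l)" and l: "degree l = 1"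
  shows "irreducible\<^sub>d f"
proof -
  have deg: "degree (f \<circ>\<^sub>p l) = degree f" for f using l by (simp add: degree_pcompose)
  show ?thesis
  proof (rule irreducible\<^sub>dI)
    show "degree f > 0" using irreducible\<^sub>dD(1)[OF irr] deg by simp
    fix g h assume gh: "degree g < degree f" "degree h < degree f" "f = g * h"
    then have "f \<circ>\<^sub>p l = (g \<circ>\<^sub>p l) * (h \<circ>\<^sub>p l)" by (simp add: pcompose_mult)
    moreover have "degree (g \<circ>\<^sub>p l) < degree (f \<circ>\<^sub>p l)" "degree (h \<circ>\<^sub>p l) < degree (f \<circ>\<^sub>p l)"
      using gh(1,2) by (simp_all only: deg)
    ultimately show False using irreducible\<^sub>dD(2)[OF irr] by blast
  qed
qed

section \<open>The polynomials \<open>G_p\<close> and \<open>H_p\<close> over the integers\<close>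

lemma i_power_cases:
  obtains "n mod 4 = 0" "\<i> ^ n = 1" | "n mod 4 = 1" "\<i> ^ n = \<i>"
    | "n mod 4 = 2" "\<i> ^ n = -1" | "n mod 4 = 3" "\<i> ^ n = - \<i>"
proof -
  have "\<i> ^ n = (\<i> ^ 4) ^ (n div 4) * \<i> ^ (n mod 4)"
    by (subst mult_div_mod_eq[of 4 n, symmetric]) (simp only: power_add power_mult)
  then have i_n: "\<i> ^ n = \<i> ^ (n mod 4)" by simp
  have "n mod 4 < 4" by simp
  then consider "n mod 4 = 0" | "n mod 4 = 1" | "n mod 4 = 2" | "n mod 4 = 3" by linarith
  then show ?thesis
    by cases (use that in \<open>simp_all add: i_n power3_eq_cube numeral_2_eq_2\<close>)
qed

definition im_sign :: "nat \<Rightarrow> int" where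
  "im_sign m = (if m mod 4 \<le> 1 then 1 else -1)"

lemma Im_one_plus_i_mult_i_power: "Im ((1 + \<i>) * \<i> ^ m) = of_int (im_sign m)"
  by (cases m rule: i_power_cases) (simp_all add: im_sign_def)

definition delta4_int :: "nat \<Rightarrow> int" where
  "delta4_int p = (if p mod 4 = 1 then 1 else -1)"

definition G_int :: "nat \<Rightarrow> int poly" where
  "G_int p = (\<Sum>k\<le>p. monom (int (p choose k) * im_sign (p - k)) k)"

lemma coeff_G_int: "coeff (G_int p) k = (if k \<le> p then int (p choose k) * im_sign (p - k) else 0)"
  unfolding G_int_def by (simp add: coeff_sum coeff_monom)

lemma Gp1_eq_of_int_poly: "Gp1 p = of_int_poly (G_int p)"
proof (rule poly_eqI)
  fix k
  have Im_of_nat_mult: "Im (of_nat n * z) = of_nat n * Im z" for n z by simp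
  have "coeff (Gp1 p) k = Im ((1 + \<i>) * coeff ([:\<i>, 1:] ^ p) k)"
    unfolding Gp1_def by (simp add: coeff_map_poly)
  also have "\<dots> = coeff (of_int_poly (G_int p)) k"
  proof (cases "k \<le> p")
    case True
    have "coeff ([:\<i>, 1:] ^ p) k = of_nat (p choose k) * \<i> ^ (p - k)"
      using True coeff_linear_poly_power[of k p \<i> 1] by simp
    then have "Im ((1 + \<i>) * coeff ([:\<i>, 1:] ^ p) k) = Im (of_nat (p choose k) * ((1 + \<i>) * \<i> ^ (p - k)))"
      by (simp only: mult.left_commute)
    also have "\<dots> = of_nat (p choose k) * Im ((1 + \<i>) * \<i> ^ (p - k))"
      by (simp only: Im_of_nat_mult)
    also have "\<dots> = coeff (of_int_poly (G_int p)) k"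
      unfolding Im_one_plus_i_mult_i_power using True by (simp add: coeff_G_int)
    finally show ?thesis .
  next
    case False
    have "degree ([:\<i>, 1:] ^ p) < k" unfolding degree_linear_power using False by simp
    then show ?thesis using False by (simp add: coeff_eq_0 coeff_G_int)
  qed
  finally show "coeff (Gp1 p) k = coeff (of_int_poly (G_int p)) k" .
qed

lemma poly_map_poly_Im: "poly (map_poly Im q) x = Im (poly q (of_real x))"
  by (induction q) (simp_all add: map_poly_pCons)

lemma pderiv_map_poly_Im: "pderiv (map_poly Im q) = map_poly Im (pderiv q)"
  by (rule poly_eqI) (simp add: coeff_pderiv coeff_map_poly)

lemma poly_Gp1: "poly (Gp1 p) x = Im ((1 + \<i>) * (\<i> + of_real x) ^ p)"
  unfolding Gp1_def poly_map_poly_Im by simp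

lemma poly_pderiv_Gp1:
  assumes "p > 0"
  shows "poly (pderiv (Gp1 p)) x = of_nat p * Im ((1 + \<i>) * (\<i> + of_real x) ^ (p - 1))"
proof -
  obtain m where p: "p = Suc m" using assms by (cases p) auto
  have "poly (pderiv (smult (1 + \<i>) ([:\<i>, 1:] ^ p))) z = of_nat p * ((1 + \<i>) * (\<i> + z) ^ (p - 1))"
    for z
    unfolding p pderiv_smult pderiv_power_Suc by (simp add: pderiv_pCons)
  moreover have "Im (of_nat p * z) = of_nat p * Im z" for z by simp
  ultimately show ?thesis unfolding Gp1_def pderiv_map_poly_Im poly_map_poly_Im by (simp only:)
qed

lemma Im_at_minus_delta4:
  assumes "odd p"
  defines "u \<equiv> \<i> - of_int (delta4_int p)"
  shows "Im ((1 + \<i>) * u ^ p) = 0"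
    and "Im ((1 + \<i>) * u ^ (p - 1)) = (-4) ^ (p div 4) * (if p mod 4 = 1 then 1 else 2)"
proof -
  define t r where "t = p div 4" and "r = p mod 4"
  have r: "r = 1 \<or> r = 3" using assms(1) unfolding r_def by presburger
  have "u ^ 4 = -4"
    unfolding u_def delta4_int_def by (simp add: complex_eq_iff power4_eq_xxxx)
  then have split: "(1 + \<i>) * u ^ (4 * t + s) = (-4) ^ t *\<^sub>R ((1 + \<i>) * u ^ s)" for s
    by (simp add: power_add power_mult scaleR_conv_of_real)
  have "p = 4 * t + r" "p - 1 = 4 * t + (r - 1)" using r unfolding t_def r_def by presburger+
  moreover have "Im ((1 + \<i>) * u ^ r) = 0" "Im ((1 + \<i>) * u ^ (r - 1)) = (if r = 1 then 1 else 2)"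
    using r by (auto simp: u_def delta4_int_def r_def power3_eq_cube power2_eq_square)
  ultimately show "Im ((1 + \<i>) * u ^ p) = 0"
    and "Im ((1 + \<i>) * u ^ (p - 1)) = (-4) ^ (p div 4) * (if p mod 4 = 1 then 1 else 2)"
    by (simp_all only: split scaleR_complex.sel) (simp_all add: t_def r_def)
qed

lemma real_of_int_poly_G_int: "of_int (poly (G_int p) x) = poly (Gp1 p) (of_int x)"
  by (simp add: Gp1_eq_of_int_poly of_int_hom.poly_map_poly)

lemma G_int_root:
  assumes "odd p"
  shows "poly (G_int p) (- delta4_int p) = 0"
proof -
  have "real_of_int (poly (G_int p) (- delta4_int p)) = Im ((1 + \<i>) * (\<i> - of_int (delta4_int p)) ^ p)"
    unfolding real_of_int_poly_G_int poly_Gp1 by simp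
  then show ?thesis using Im_at_minus_delta4(1)[OF assms] by simp
qed

definition H_int :: "nat \<Rightarrow> int poly" where
  "H_int p = synthetic_div (G_int p) (- delta4_int p)"

lemma G_int_eq_mult:
  assumes "odd p"
  shows "G_int p = [:delta4_int p, 1:] * H_int p"
  using synthetic_div_correct'[of "- delta4_int p" "G_int p"] G_int_root[OF assms]
  unfolding H_int_def by simp

lemma Hp1_eq_of_int_poly:
  assumes "odd p"
  shows "Hp1 p = of_int_poly (H_int p)"
proof -
  have "of_int_poly [:delta4_int p, 1:] = [:delta4 p, 1:]"
    by (simp add: delta4_def delta4_int_def)
  then have "Gp1 p = [:delta4 p, 1:] * of_int_poly (H_int p)"
    by (simp only: Gp1_eq_of_int_poly G_int_eq_mult[OF assms] of_int_poly_hom.hom_mult)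
  then show ?thesis unfolding Hp1_def by (simp del: mult_pCons_left)
qed

lemma degree_G_int: "degree (G_int p) = p"
  and lead_coeff_G_int: "lead_coeff (G_int p) = 1"
proof -
  have "degree (G_int p) \<le> p" by (rule degree_le) (simp add: coeff_G_int)
  moreover have "coeff (G_int p) p = 1" by (simp add: coeff_G_int im_sign_def)
  ultimately show "degree (G_int p) = p" by (metis le_antisym le_degree one_neq_zero)
  with \<open>coeff (G_int p) p = 1\<close> show "lead_coeff (G_int p) = 1" by simp
qed

lemma degree_H_int: "odd p \<Longrightarrow> degree (H_int p) = p - 1"
  and lead_coeff_H_int: "odd p \<Longrightarrow> lead_coeff (H_int p) = 1"
proof -
  assume "odd p"
  note G = G_int_eq_mult[OF this]
  have "H_int p \<noteq> 0" using G lead_coeff_G_int[of p] by auto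
  then have "degree (G_int p) = degree [:delta4_int p, 1:] + degree (H_int p)"
    unfolding G by (intro degree_mult_eq) simp_all
  then show "degree (H_int p) = p - 1" by (simp add: degree_G_int)
  have "lead_coeff (G_int p) = lead_coeff [:delta4_int p, 1:] * lead_coeff (H_int p)"
    unfolding G by (rule lead_coeff_mult)
  then show "lead_coeff (H_int p) = 1" by (simp add: lead_coeff_G_int)
qed

lemma poly_H_int_at_minus_delta4:
  assumes "odd p"
  shows "poly (H_int p) (- delta4_int p) = int p * (-4) ^ (p div 4) * (if p mod 4 = 1 then 1 else 2)"
proof -
  have "pderiv (G_int p) = [:delta4_int p, 1:] * pderiv (H_int p) + H_int p"
    unfolding G_int_eq_mult[OF assms] pderiv_mult by (simp add: pderiv_pCons)
  then have "poly (H_int p) (- delta4_int p) = poly (pderiv (G_int p)) (- delta4_int p)" by simp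
  moreover have "real_of_int (poly (pderiv (G_int p)) x) = poly (pderiv (Gp1 p)) (of_int x)" for x
    unfolding of_int_hom.poly_map_poly[symmetric] of_int_hom.map_poly_pderiv Gp1_eq_of_int_poly ..
  ultimately have "real_of_int (poly (H_int p) (- delta4_int p)) =
      poly (pderiv (Gp1 p)) (of_int (- delta4_int p))"
    by simp
  also have "\<dots> = of_nat p * Im ((1 + \<i>) * (\<i> - of_int (delta4_int p)) ^ (p - 1))"
    using assms by (simp add: poly_pderiv_Gp1 odd_pos)
  finally have "real_of_int (poly (H_int p) (- delta4_int p)) =
      real_of_int (int p * (-4) ^ (p div 4) * (if p mod 4 = 1 then 1 else 2))"
    unfolding Im_at_minus_delta4(2)[OF assms] by simp
  then show ?thesis by (simp only: of_int_eq_iff)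
qed

lemma G_int_cong_linear_power:
  assumes "prime p" "odd p"
  shows "int p dvd coeff (G_int p - [:delta4_int p, 1:] ^ p) k"
proof (cases "k \<le> p")
  case True
  have "coeff (G_int p - [:delta4_int p, 1:] ^ p) k =
      int (p choose k) * (im_sign (p - k) - delta4_int p ^ (p - k))"
    using True coeff_linear_poly_power[of k p "delta4_int p" 1] by (simp add: coeff_G_int algebra_simps)
  moreover have "im_sign (p - k) = delta4_int p ^ (p - k)" if "k = 0 \<or> k = p"
    using that assms(2) by (auto simp: im_sign_def delta4_int_def) presburger+
  moreover have "p dvd p choose k" if "0 < k" "k < p"
    using that assms(1) by (intro dvd_choose_prime) auto
  ultimately show ?thesis using True
    by (cases "k = 0 \<or> k = p") (auto simp flip: int_dvd_int_iff)
next
  case False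
  have "degree ([:delta4_int p, 1:] ^ p) < k" unfolding degree_linear_power using False by simp
  then show ?thesis using False by (simp add: coeff_eq_0 coeff_G_int)
qed

lemma coeff_H_int_shift_dvd:
  assumes "prime p" "odd p" "j < p - 1"
  shows "int p dvd coeff (H_int p \<circ>\<^sub>p [:- delta4_int p, 1:]) j"
proof -
  let ?L = "[:- delta4_int p, 1:]"
  define R where "R = map_poly (\<lambda>c. c div int p) (G_int p - [:delta4_int p, 1:] ^ p)"
  have "G_int p - [:delta4_int p, 1:] ^ p = smult (int p) R"
    using G_int_cong_linear_power[OF assms(1,2)] by (intro poly_eqI) (simp add: R_def coeff_map_poly)
  then have G: "G_int p = [:delta4_int p, 1:] ^ p + smult (int p) R" by (simp add: algebra_simps)
  have shift: "[:delta4_int p, 1:] \<circ>\<^sub>p ?L = [:0, 1:]" by (simp add: pcompose_pCons)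
  have "[:0, 1:] * (H_int p \<circ>\<^sub>p ?L) = G_int p \<circ>\<^sub>p ?L"
    unfolding G_int_eq_mult[OF assms(2)] pcompose_mult shift ..
  also have "\<dots> = [:0, 1:] ^ p + smult (int p) (R \<circ>\<^sub>p ?L)"
    unfolding G pcompose_add pcompose_smult pcompose_hom.hom_power shift ..
  finally have "coeff ([:0, 1:] * (H_int p \<circ>\<^sub>p ?L)) (Suc j) =
      coeff ([:0, 1:] ^ p + smult (int p) (R \<circ>\<^sub>p ?L)) (Suc j)"
    by (rule arg_cong)
  then have "coeff (H_int p \<circ>\<^sub>p ?L) j = coeff ([:0, 1:] ^ p) (Suc j) + int p * coeff (R \<circ>\<^sub>p ?L) (Suc j)"
    by simp
  moreover have "coeff ([:0, 1:] ^ p) (Suc j) = (0 :: int)"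
  proof -
    have "Suc j < p" using assms(3) by linarith
    then show ?thesis using coeff_linear_poly_power[of "Suc j" p "0 :: int" 1] by simp
  qed
  ultimately show ?thesis by simp
qed

lemma not_square_dvd_H_int_at_minus_delta4:
  assumes p: "prime p" "odd p"
  shows "\<not> (int p)\<^sup>2 dvd poly (H_int p) (- delta4_int p)"
proof
  define c :: int where "c = (-4) ^ (p div 4) * (if p mod 4 = 1 then 1 else 2)"
  have pi: "prime (int p)" using p(1) by simp
  have not2: "\<not> int p dvd 2"
  proof
    assume "int p dvd 2"
    then have "int p dvd int 2" by simp
    then have "p dvd 2" by (simp only: int_dvd_int_iff)
    then have "p = 2" using primes_dvd_imp_eq[OF p(1) two_is_prime_nat] by simp
    then show False using p(2) by simp
  qed
  then have "\<not> int p dvd 4" using prime_dvd_mult_iff[OF pi, of 2 2] by simp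
  then have "\<not> int p dvd (-4) ^ (p div 4)" by (auto dest: prime_dvd_power[OF pi])
  moreover have "\<not> int p dvd (if p mod 4 = 1 then 1 else 2)"
    using not2 not_prime_unit[of "int p"] pi by auto
  ultimately have "\<not> int p dvd c" unfolding c_def prime_dvd_mult_iff[OF pi] by blast
  assume "(int p)\<^sup>2 dvd poly (H_int p) (- delta4_int p)"
  then have "int p * int p dvd int p * c"
    by (simp add: poly_H_int_at_minus_delta4[OF p(2)] c_def power2_eq_square mult.assoc)
  then show False using \<open>\<not> int p dvd c\<close> prime_gt_0_nat[OF p(1)] by simp
qed

lemma irreducible_d_H_int:
  assumes "prime p" "odd p"
  shows "irreducible\<^sub>d (H_int p)"
proof (rule irreducible_d_pcompose_linear)
  let ?K = "H_int p \<circ>\<^sub>p [:- delta4_int p, 1:]"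
  have "p \<ge> 3" using assms prime_ge_2_nat[of p] by presburger
  have deg: "degree ?K = p - 1" using degree_H_int[OF assms(2)] by (simp add: degree_pcompose)
  have "lead_coeff ?K = 1" by (subst lead_coeff_comp) (simp_all add: lead_coeff_H_int[OF assms(2)])
  moreover have "coeff ?K 0 = poly (H_int p) (- delta4_int p)"
    by (simp add: poly_0_coeff_0[symmetric] poly_pcompose)
  ultimately show "irreducible\<^sub>d ?K"
    using assms \<open>p \<ge> 3\<close> deg coeff_H_int_shift_dvd[OF assms] not_square_dvd_H_int_at_minus_delta4[OF assms]
    by (intro eisenstein_irreducible_d[of "int p"]) (simp_all add: prime_ge_2_int)
qed simp

section \<open>The Cayley transform of a root\<close>

lemma poly_of_real_map_poly_Im:
  "poly (map_poly of_real (map_poly Im q)) z = (poly q z - cnj (poly q (cnj z))) / (2 * \<i>)"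
proof -
  have "map_poly of_real (map_poly Im q) = smult (1 / (2 * \<i>)) (q - map_poly cnj q)"
    by (rule poly_eqI) (simp add: coeff_map_poly complex_eq_iff)
  then show ?thesis by (simp add: poly_map_poly_cnj diff_divide_distrib)
qed

lemma Gp1_root_iff:
  "poly (map_poly of_real (Gp1 p)) z = 0 \<longleftrightarrow> (1 + \<i>) * (z + \<i>) ^ p = (1 - \<i>) * (z - \<i>) ^ p"
  unfolding Gp1_def poly_of_real_map_poly_Im by (simp add: add.commute)

lemma cayley_power_eq_minus_i:
  assumes eq: "(1 + \<i>) * (z + \<i>) ^ p = (1 - \<i>) * (z - \<i>) ^ p" and "p > 0"
  shows "z \<noteq> \<i>" "((z + \<i>) / (z - \<i>)) ^ p = - \<i>"
proof -
  show "z \<noteq> \<i>"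
  proof
    assume "z = \<i>"
    then have "(1 + \<i>) * (2 * \<i>) ^ p = 0" using eq \<open>p > 0\<close> by simp
    moreover have "1 + \<i> \<noteq> 0" by (simp add: complex_eq_iff)
    ultimately show False by simp
  qed
  have "(1 + \<i>) * (z + \<i>) ^ p = (1 + \<i>) * (- \<i> * (z - \<i>) ^ p)"
    using eq by (simp add: algebra_simps)
  then have "(z + \<i>) ^ p = - \<i> * (z - \<i>) ^ p" by (simp add: complex_eq_iff)
  then show "((z + \<i>) / (z - \<i>)) ^ p = - \<i>"
    using \<open>z \<noteq> \<i>\<close> by (simp add: power_divide)
qed

lemma exp_root_of_unity_power:
  "exp (2 * pi * \<i> / of_nat n) ^ k = cis (2 * pi * real k / real n)"
proof -
  have "exp (2 * pi * \<i> / of_nat n) = cis (2 * pi / real n)"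
    by (simp add: cis_conv_exp field_simps)
  then show ?thesis by (simp add: DeMoivre field_simps)
qed

lemma root_of_unity_eq_exp_power:
  assumes "n > 0" "w ^ n = 1"
  obtains k where "w = exp (2 * pi * \<i> / of_nat n) ^ k"
proof -
  have "w \<in> (\<lambda>k. cis (2 * pi * real k / real n)) ` {..<n}"
    using bij_betw_roots_unity[OF assms(1)] assms(2) unfolding bij_betw_def by auto
  then show ?thesis using that unfolding exp_root_of_unity_power by auto
qed

lemma exp_4p_power_p:
  assumes "p > 0"
  shows "exp (2 * pi * \<i> / of_nat (4 * p)) ^ p = \<i>"
proof -
  have "2 * pi * real p / real (4 * p) = pi / 2" using assms by (simp add: field_simps)
  then show ?thesis unfolding exp_root_of_unity_power using assms by simp
qed

lemma power_eq_minus_i_generator: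
  assumes p: "prime p" and wp: "w ^ p = - \<i>" and w4: "w ^ 4 \<noteq> 1"
  defines "\<zeta> \<equiv> exp (2 * pi * \<i> / of_nat (4 * p))"
  obtains m x where "w = \<zeta> ^ m" "\<zeta> = w ^ x"
proof -
  have "p > 0" using p by (simp add: prime_gt_0_nat)
  have \<zeta>p: "\<zeta> ^ p = \<i>" unfolding \<zeta>_def using exp_4p_power_p[OF \<open>p > 0\<close>] .
  have "w ^ (4 * p) = 1" using wp by (simp add: power_mult mult.commute[of 4])
  then obtain m where wm: "w = \<zeta> ^ m"
    using root_of_unity_eq_exp_power[of "4 * p" w] \<open>p > 0\<close> unfolding \<zeta>_def by auto
  have "\<i> ^ m = - \<i>" using wp \<zeta>p unfolding wm by (metis power_mult mult.commute)
  then have "m mod 4 = 3" by (cases m rule: i_power_cases) (simp_all add: complex_eq_iff)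
  then have "odd m" by presburger
  have "\<not> p dvd m"
  proof
    assume "p dvd m"
    then obtain t where "m = p * t" by blast
    then have "w ^ 4 = ((\<zeta> ^ p) ^ t) ^ 4" unfolding wm by (simp only: power_mult)
    also have "\<dots> = (\<i> ^ 4) ^ t" unfolding \<zeta>p by (simp only: mult.commute flip: power_mult)
    finally show False using w4 by simp
  qed
  then have "coprime m p" using prime_imp_coprime[OF p] by (simp add: ac_simps)
  moreover have "coprime m 4" using \<open>odd m\<close> coprime_power_right_iff[of m 2 2] by simp
  ultimately have "gcd m (4 * p) = 1" by (simp add: coprime_iff_gcd_eq_1[symmetric])
  moreover have "m \<noteq> 0" using \<open>odd m\<close> by presburger
  ultimately obtain x y where xy: "m * x = 4 * p * y + 1" using bezout_nat[of m "4 * p"] by auto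
  have "w ^ x = \<zeta> ^ (m * x)" unfolding wm by (simp only: power_mult)
  also have "\<dots> = (\<zeta> ^ (4 * p)) ^ y * \<zeta>" unfolding xy by (simp only: power_add power_mult power_one_right)
  also have "\<zeta> ^ (4 * p) = 1" using \<zeta>p by (simp add: power_mult mult.commute[of 4])
  finally have "\<zeta> = w ^ x" by simp
  with wm show ?thesis by (rule that)
qed

lemma cayley_equation_if_root_H_int:
  assumes "odd p" "poly (of_int_poly (H_int p)) z = 0"
  shows "(1 + \<i>) * (z + \<i>) ^ p = (1 - \<i>) * (z - \<i>) ^ p"
proof -
  have "map_poly of_real (Gp1 p) = (of_int_poly (G_int p) :: complex poly)"
    by (simp add: Gp1_eq_of_int_poly map_poly_map_poly o_def)
  moreover have "poly (of_int_poly (G_int p)) z = 0"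
    unfolding G_int_eq_mult[OF assms(1)] of_int_poly_hom.hom_mult poly_mult using assms(2) by simp
  ultimately show ?thesis using Gp1_root_iff[of p z] by simp
qed

lemma cayley_add_inverse_in_Qadj:
  assumes "\<alpha> \<noteq> \<i>" "\<alpha> \<noteq> - \<i>"
  shows "(\<alpha> + \<i>) / (\<alpha> - \<i>) + inverse ((\<alpha> + \<i>) / (\<alpha> - \<i>)) \<in> Qadj {\<alpha>}"
proof -
  have ne: "\<alpha> + \<i> \<noteq> 0" "\<alpha> - \<i> \<noteq> 0" using assms by (auto simp: eq_neg_iff_add_eq_0)
  then have "(\<alpha> + \<i>) / (\<alpha> - \<i>) + inverse ((\<alpha> + \<i>) / (\<alpha> - \<i>)) =
      ((\<alpha> + \<i>) * (\<alpha> + \<i>) + (\<alpha> - \<i>) * (\<alpha> - \<i>)) / ((\<alpha> + \<i>) * (\<alpha> - \<i>))"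
    by (simp add: field_simps)
  also have "\<dots> = 2 * (\<alpha> * \<alpha> - 1) / (\<alpha> * \<alpha> + 1)"
    by (simp add: algebra_simps)
  also have "\<dots> \<in> Qadj {\<alpha>}"
    using subset_Qadj[of "{\<alpha>}"] subfield_C_Rats[OF subfield_C_Qadj, of 2]
    by (simp add: subfield_C_divide subfield_C_mult subfield_C_diff subfield_C_add subfield_C_1 subfield_C_Qadj)
  finally show ?thesis .
qed

lemma cayley_in_Qadj_add_inverse:
  assumes "\<zeta> \<noteq> 0" "\<zeta> ^ p = \<i>" "w = \<zeta> ^ m" "w \<noteq> 1"
  shows "\<i> * (w + 1) / (w - 1) \<in> Qadj {\<zeta> + inverse \<zeta>}"
proof -
  let ?K = "Qadj {\<zeta> + inverse \<zeta>}"
  define v where "v = inverse w"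
  have "w \<noteq> 0" using assms(1,3) by simp
  then have wv: "w * v = 1" "v * w = 1" unfolding v_def by simp_all
  have "v \<noteq> 1" using wv assms(4) by auto
  have sums: "\<zeta> ^ k + inverse \<zeta> ^ k \<in> ?K" for k
    using assms(1) subset_Qadj[of "{\<zeta> + inverse \<zeta>}"]
    by (intro subfield_C_power_add_inverse_power[OF subfield_C_Qadj]) auto
  have "\<i> * (w + 1) / (w - 1) = \<i> * (w + 1) * (v - 1) / ((w - 1) * (v - 1))"
    using \<open>v \<noteq> 1\<close> by simp
  also have "\<i> * (w + 1) * (v - 1) = - (\<i> * w - \<i> * v)"
    by (simp add: algebra_simps wv)
  also have "(w - 1) * (v - 1) = 2 - (w + v)"
    by (simp add: algebra_simps wv)
  also have "\<i> * w - \<i> * v = \<zeta> ^ (p + m) + inverse \<zeta> ^ (p + m)"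
    using assms(2,3) by (simp add: v_def power_add power_inverse)
  also have "w + v = \<zeta> ^ m + inverse \<zeta> ^ m"
    using assms(3) by (simp add: v_def power_inverse)
  finally have eq: "\<i> * (w + 1) / (w - 1) =
      - (\<zeta> ^ (p + m) + inverse \<zeta> ^ (p + m)) / (2 - (\<zeta> ^ m + inverse \<zeta> ^ m))" .
  have "2 \<in> ?K" by (simp add: subfield_C_Rats[OF subfield_C_Qadj])
  then show ?thesis
    unfolding eq by (intro subfield_C_divide subfield_C_uminus subfield_C_diff subfield_C_Qadj sums)
qed

lemma cayley_of_fourth_root_of_unity_in_Rats:
  assumes "w ^ 4 = 1" "w \<noteq> 1"
  shows "\<i> * (w + 1) / (w - 1) \<in> \<rat>"
proof -
  have "(w - 1) * (w + 1) * (w - \<i>) * (w + \<i>) = 0"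
    using assms(1) by (simp add: algebra_simps power4_eq_xxxx)
  then have "w = -1 \<or> w = \<i> \<or> w = - \<i>" using assms(2) by (auto simp: eq_neg_iff_add_eq_0)
  moreover have "\<i> - 1 \<noteq> 0" "- \<i> - 1 \<noteq> 0" by (simp_all add: complex_eq_iff)
  ultimately have "\<i> * (w + 1) / (w - 1) \<in> {0, 1, -1}"
    by (auto simp: field_simps)
  then show ?thesis by auto
qed

lemma Qadj_eq_real_cyclotomic_field:
  assumes p: "prime p" and eq: "(1 + \<i>) * (\<alpha> + \<i>) ^ p = (1 - \<i>) * (\<alpha> - \<i>) ^ p"
    and irrat: "\<alpha> \<notin> \<rat>"
  defines "\<zeta> \<equiv> exp (2 * pi * \<i> / of_nat (4 * p))"
  shows "Qadj {\<alpha>} = Qadj {\<zeta> + inverse \<zeta>}"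
proof -
  define w where "w = (\<alpha> + \<i>) / (\<alpha> - \<i>)"
  have "p > 0" using p by (simp add: prime_gt_0_nat)
  have "\<alpha> \<noteq> \<i>" and wp: "w ^ p = - \<i>"
    unfolding w_def using cayley_power_eq_minus_i[OF eq \<open>p > 0\<close>] by auto
  then have "w \<noteq> 0" "w \<noteq> 1" using \<open>p > 0\<close> by (auto simp: complex_eq_iff)
  then have "\<alpha> \<noteq> - \<i>" unfolding w_def by auto
  have "\<alpha> - \<i> \<noteq> 0" using \<open>\<alpha> \<noteq> \<i>\<close> by simp
  then have "w + 1 = 2 * \<alpha> / (\<alpha> - \<i>)" "w - 1 = 2 * \<i> / (\<alpha> - \<i>)"
    unfolding w_def by (simp_all add: field_simps)
  then have \<alpha>: "\<alpha> = \<i> * (w + 1) / (w - 1)" using \<open>\<alpha> - \<i> \<noteq> 0\<close> by simp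
  then have "w ^ 4 \<noteq> 1" using cayley_of_fourth_root_of_unity_in_Rats \<open>w \<noteq> 1\<close> irrat by metis
  then obtain m x where m: "w = \<zeta> ^ m" and x: "\<zeta> = w ^ x"
    using power_eq_minus_i_generator[OF p wp] unfolding \<zeta>_def by metis
  have "\<zeta> + inverse \<zeta> = w ^ x + inverse w ^ x" using x by (simp add: power_inverse)
  also have "\<dots> \<in> Qadj {\<alpha>}"
    using cayley_add_inverse_in_Qadj[OF \<open>\<alpha> \<noteq> \<i>\<close> \<open>\<alpha> \<noteq> - \<i>\<close>] \<open>w \<noteq> 0\<close>
    unfolding w_def[symmetric] by (rule subfield_C_power_add_inverse_power[OF subfield_C_Qadj, rotated])
  finally have "Qadj {\<zeta> + inverse \<zeta>} \<subseteq> Qadj {\<alpha>}" by (rule Qadj_singleton_subset)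
  moreover have "\<zeta> ^ p = \<i>" "\<zeta> \<noteq> 0" unfolding \<zeta>_def using exp_4p_power_p[OF \<open>p > 0\<close>] by simp_all
  then have "Qadj {\<alpha>} \<subseteq> Qadj {\<zeta> + inverse \<zeta>}"
    using cayley_in_Qadj_add_inverse[OF _ _ m \<open>w \<noteq> 1\<close>] \<alpha> by (metis Qadj_singleton_subset)
  ultimately show ?thesis by blast
qed

theorem lemma7:
  fixes p :: nat and \<alpha> :: complex
  assumes "prime p" and "odd p"
    and "poly (map_poly complex_of_real (Hp1 p)) \<alpha> = 0"
  defines "\<zeta> \<equiv> exp (2 * pi * \<i> / of_nat (4 * p))"
  shows "Qadj {\<alpha>} = Qadj {\<zeta> + inverse \<zeta>}
    \<and> Q_degree_eq (Qadj {\<alpha>}) (p - 1)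
    \<and> Qadj {\<zeta> ^ 4 + inverse (\<zeta> ^ 4)} \<subseteq> Qadj {\<alpha>}"
proof -
  let ?H = "map_poly rat_of_int (H_int p)"
  have irr: "irreducible ?H"
    using irreducible\<^sub>d_int_rat[OF irreducible_d_H_int[OF assms(1,2)]] by simp
  have deg: "degree ?H = p - 1" using degree_H_int[OF assms(2)] by simp
  have root_int: "poly (of_int_poly (H_int p)) \<alpha> = 0"
    using assms(3) by (simp add: Hp1_eq_of_int_poly[OF assms(2)] map_poly_map_poly o_def)
  then have root: "poly (map_poly of_rat ?H) \<alpha> = 0" by (simp add: map_poly_map_poly o_def)
  have "p \<ge> 3" using assms(1,2) prime_ge_2_nat[of p] by presburger
  then have "\<alpha> \<notin> \<rat>" using irreducible_root_not_Rats[OF irr root] deg by simp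
  then have eq: "Qadj {\<alpha>} = Qadj {\<zeta> + inverse \<zeta>}"
    unfolding \<zeta>_def by (rule Qadj_eq_real_cyclotomic_field[OF assms(1) cayley_equation_if_root_H_int[OF assms(2) root_int]])
  have "\<zeta> ^ 4 + inverse \<zeta> ^ 4 \<in> Qadj {\<zeta> + inverse \<zeta>}"
    using subset_Qadj[of "{\<zeta> + inverse \<zeta>}"]
    by (intro subfield_C_power_add_inverse_power[OF subfield_C_Qadj]) (auto simp: \<zeta>_def)
  then show ?thesis
    using eq Q_degree_eq_Qadj_irreducible_root[OF irr root] deg Qadj_singleton_subset
    by (auto simp: power_inverse)
qed

end
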